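(* Fix $\alpha>1$ and $K>1$. For $n\ge2$ let $\mathcal{M}=\mathcal{M}(\alpha,K)$ be the seeded intervals defined below, and let $N_n$ be the number of distinct integer triples $(s,v,e)$ with $(s,e]\in\mathcal{M}$ and $s<v<e$. Then $N_n=\mathcal{O}(n\log n)$, i.e. there is a constant $C$ depending only on $\alpha$ and $K$ such that $N_n\le Cn\log n$ for all $n\ge2$.
   Context: Seeded intervals $\mathcal{M}(\alpha,K)$ for sample size $n$: let $l_1=1$, $l_{j+1}=\max\{l_j+1,\lfloor\alpha l_j\rfloor\}$ for $j\ge1$, $H=\max\{j:l_j\le n/2\}$, $s_l=\max\{1,\lfloor l/K\rfloor\}$, $\mathcal{I}_l=\{(n-2l,n]\}\cup\{(is_l,\,is_l+2l]: i=0,1,\dots,\lfloor(n-2l)/s_l\rfloor\}$, and $\mathcal{M}(\alpha,K)=\bigcup_{j=1}^{H}\mathcal{I}_{l_j}$, where $(a,b]$ denotes the integer interval $\{a+1,\dots,b\}$. *)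

theory Defs
  imports Complex_Main
begin

text \<open>Lengths l_1, l_2, ... ; here seed_l alpha j is l_(j+1) (0-indexed).\<close>
fun seed_l :: "real \<Rightarrow> nat \<Rightarrow> nat" where
  "seed_l \<alpha> 0 = 1"
| "seed_l \<alpha> (Suc j) = max (Suc (seed_l \<alpha> j)) (nat \<lfloor>\<alpha> * real (seed_l \<alpha> j)\<rfloor>)"

text \<open>H - 1 in 0-indexed form: the largest index j with l_(j+1) <= n/2.\<close>
definition seed_H :: "real \<Rightarrow> nat \<Rightarrow> nat" where
  "seed_H \<alpha> n = (GREATEST j. real (seed_l \<alpha> j) \<le> real n / 2)"

definition seed_shift :: "real \<Rightarrow> nat \<Rightarrow> nat" where
  "seed_shift K l = max 1 (nat \<lfloor>real l / K\<rfloor>)"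

text \<open>Intervals (a,b] are represented by the pair (a,b).\<close>
definition seed_I :: "real \<Rightarrow> nat \<Rightarrow> nat \<Rightarrow> (nat \<times> nat) set" where
  "seed_I K n l = {(n - 2*l, n)} \<union>
     {(i * seed_shift K l, i * seed_shift K l + 2*l) | i. i \<le> (n - 2*l) div seed_shift K l}"

definition seeded_intervals :: "real \<Rightarrow> real \<Rightarrow> nat \<Rightarrow> (nat \<times> nat) set" where
  "seeded_intervals \<alpha> K n = (\<Union>j\<in>{0..seed_H \<alpha> n}. seed_I K n (seed_l \<alpha> j))"

definition seed_triples :: "real \<Rightarrow> real \<Rightarrow> nat \<Rightarrow> nat" where
  "seed_triples \<alpha> K n = card {(s, v, e). (s, e) \<in> seeded_intervals \<alpha> K n \<and> s < v \<and> v < e}"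

end

theory Submission
  imports Defs
begin

text \<open>
  A seeded interval of length at most \<open>2l\<close> carries fewer than \<open>2l\<close> triples, and the
  intervals of one length \<open>l\<close> are spaced \<open>seed_shift K l \<ge> l/(2K)\<close> apart, so every level
  contributes \<open>O(K n)\<close> triples. Since \<open>l\<^sub>j\<close> eventually grows by a factor close to \<open>\<alpha>\<close>,
  the lengths bounded by \<open>n/2\<close> form only \<open>O(log n)\<close> levels.
\<close>

lemma seed_l_ge: "Suc j \<le> seed_l a j"
  by (induction j) auto

lemma mono_seed_l: "mono (seed_l a)"
  by (rule incseq_SucI) simp

text \<open>Once \<open>l\<^sub>j \<ge> 1/(a - \<beta>)\<close>, the rounding loss in \<open>\<lfloor>a l\<^sub>j\<rfloor>\<close> is absorbed by \<open>(a - \<beta>) l\<^sub>j\<close>.\<close>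

lemma seed_l_geometric_growth:
  assumes "1 \<le> \<beta>" and "\<beta> < a"
  defines "M \<equiv> nat \<lceil>1 / (a - \<beta>)\<rceil>"
  shows "\<beta> ^ j \<le> \<beta> ^ M * real (seed_l a j)"
proof (induction j)
  case 0
  show ?case using assms(1) by simp
next
  case (Suc j)
  show ?case
  proof (cases "Suc j \<le> M")
    case True
    have "\<beta> ^ Suc j \<le> \<beta> ^ M" using True assms(1) by (rule power_increasing)
    also have "\<dots> \<le> \<beta> ^ M * real (seed_l a (Suc j))"
      using seed_l_ge[of "Suc j" a] assms(1) by simp
    finally show ?thesis .
  next
    case False
    let ?l = "real (seed_l a j)"
    have "?l \<ge> 1 / (a - \<beta>)"
      using seed_l_ge[of j a] False unfolding M_def by linarith
    then have "a * ?l - 1 \<ge> \<beta> * ?l"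
      using assms(2) by (simp add: field_simps)
    moreover have "real (seed_l a (Suc j)) \<ge> a * ?l - 1"
      by simp linarith
    ultimately have step: "\<beta> * ?l \<le> real (seed_l a (Suc j))"
      by linarith
    have "\<beta> ^ Suc j \<le> \<beta> * (\<beta> ^ M * ?l)"
      using Suc.IH assms(1) by simp
    also have "\<dots> \<le> \<beta> ^ M * real (seed_l a (Suc j))"
      using mult_left_mono[OF step, of "\<beta> ^ M"] assms(1) by (simp add: ac_simps)
    finally show ?thesis .
  qed
qed

lemma seed_l_seed_H_le:
  assumes "2 \<le> n"
  shows "real (seed_l a (seed_H a n)) \<le> real n / 2"
  unfolding seed_H_def
proof (rule GreatestI_nat)
  show "real (seed_l a 0) \<le> real n / 2" using assms by simp
  show "j \<le> n" if "real (seed_l a j) \<le> real n / 2" for j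
    using seed_l_ge[of j a] that by linarith
qed

lemma seed_H_log_bound:
  assumes "1 < a"
  shows "\<exists>C. \<forall>n. 2 \<le> n \<longrightarrow> real (seed_H a n) + 1 \<le> C * ln (real n)"
proof -
  define \<beta> where "\<beta> = (1 + a) / 2"
  define M where "M = nat \<lceil>1 / (a - \<beta>)\<rceil>"
  have \<beta>: "1 < \<beta>" "\<beta> < a" using assms unfolding \<beta>_def by simp_all
  define C where "C = (real M + 1) / ln 2 + 1 / ln \<beta>"
  have "real (seed_H a n) + 1 \<le> C * ln (real n)" if n: "2 \<le> n" for n
  proof -
    let ?H = "seed_H a n"
    have "\<beta> ^ ?H \<le> \<beta> ^ M * real (seed_l a ?H)"
      using seed_l_geometric_growth[of \<beta> a ?H] \<beta> unfolding M_def by simp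
    also have "\<dots> \<le> \<beta> ^ M * real n"
      using seed_l_seed_H_le[OF n, of a] \<beta> by (intro mult_left_mono) auto
    finally have "ln (\<beta> ^ ?H) \<le> ln (\<beta> ^ M * real n)"
      using \<beta> by (intro ln_mono) auto
    then have "real ?H * ln \<beta> \<le> real M * ln \<beta> + ln (real n)"
      using \<beta> n by (simp add: ln_mult ln_realpow)
    then have "real ?H \<le> real M + ln (real n) / ln \<beta>"
      using \<beta> by (simp add: field_simps)
    moreover have "real M + 1 \<le> (real M + 1) / ln 2 * ln (real n)"
      using n by (simp add: field_simps add_mono mult_left_mono)
    ultimately show ?thesis unfolding C_def by (simp add: algebra_simps)
  qed
  then show ?thesis by blast
qed

definition triples_over :: "(nat \<times> nat) set \<Rightarrow> (nat \<times> nat \<times> nat) set" where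
  "triples_over A = {(s, v, e). (s, e) \<in> A \<and> s < v \<and> v < e}"

lemma triples_over_UN: "triples_over (\<Union>i\<in>I. A i) = (\<Union>i\<in>I. triples_over (A i))"
  unfolding triples_over_def by auto

lemma seed_triples_eq: "seed_triples a K n = card (triples_over (seeded_intervals a K n))"
  unfolding seed_triples_def triples_over_def ..

lemma card_triples_over_le:
  assumes "finite A" and "\<And>s e. (s, e) \<in> A \<Longrightarrow> e - s \<le> L"
  shows "card (triples_over A) \<le> L * card A"
proof -
  have "triples_over A = (\<Union>(s, e)\<in>A. (\<lambda>v. (s, v, e)) ` {s<..<e})"
    unfolding triples_over_def by auto
  also have "card \<dots> \<le> (\<Sum>(s, e)\<in>A. card ((\<lambda>v. (s, v, e)) ` {s<..<e}))"
    using card_UN_le[OF assms(1)] by (simp add: case_prod_beta')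
  also have "\<dots> \<le> (\<Sum>(s, e)\<in>A. L)"
  proof (rule sum_mono, clarify)
    fix s e assume "(s, e) \<in> A"
    have "card ((\<lambda>v. (s, v, e)) ` {s<..<e}) \<le> card {s<..<e}"
      by (rule card_image_le) simp
    also have "\<dots> \<le> e - s"
      by simp
    finally show "card ((\<lambda>v. (s, v, e)) ` {s<..<e}) \<le> L"
      using assms(2)[OF \<open>(s, e) \<in> A\<close>] by linarith
  qed
  finally show ?thesis by (simp add: mult.commute)
qed

lemma seed_I_eq:
  "seed_I K n l = insert (n - 2 * l, n)
     ((\<lambda>i. (i * seed_shift K l, i * seed_shift K l + 2 * l)) ` {..(n - 2 * l) div seed_shift K l})"
  unfolding seed_I_def by auto

lemma finite_seed_I: "finite (seed_I K n l)"
  unfolding seed_I_eq by simp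

lemma card_seed_I_le: "card (seed_I K n l) \<le> (n - 2 * l) div seed_shift K l + 2"
  unfolding seed_I_eq
  by (rule order_trans[OF card_insert_le_m1]) (auto intro: order_trans[OF card_image_le])

lemma seed_I_length_le: "(s, e) \<in> seed_I K n l \<Longrightarrow> e - s \<le> 2 * l"
  unfolding seed_I_def by auto

lemma seed_shift_lower_bound:
  assumes "0 < K"
  shows "real l \<le> 2 * K * real (seed_shift K l)"
proof (cases "real l < 2 * K")
  case True
  have "1 \<le> real (seed_shift K l)" unfolding seed_shift_def by simp
  then have "2 * K * 1 \<le> 2 * K * real (seed_shift K l)"
    using assms by (intro mult_left_mono) auto
  then show ?thesis using True by linarith
next
  case False
  then have "2 \<le> real l / K" using assms by (simp add: field_simps)
  then have "real l / (2 * K) \<le> real l / K - 1"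
    using assms by (simp add: field_simps)
  also have "\<dots> \<le> real (seed_shift K l)"
    unfolding seed_shift_def by linarith
  finally show ?thesis using assms by (simp add: field_simps)
qed

lemma card_triples_over_seed_I_le:
  assumes "0 < K" and "2 * l \<le> n"
  shows "real (card (triples_over (seed_I K n l))) \<le> (2 + 4 * K) * real n"
proof -
  let ?s = "seed_shift K l"
  let ?q = "(n - 2 * l) div ?s"
  have qs: "real ?q * real ?s \<le> real n"
    by (metis of_nat_le_iff of_nat_mult div_times_less_eq_dividend diff_le_self le_trans)
  have "card (triples_over (seed_I K n l)) \<le> 2 * l * card (seed_I K n l)"
    by (rule card_triples_over_le[OF finite_seed_I seed_I_length_le])
  also have "\<dots> \<le> 2 * l * (?q + 2)"
    by (intro mult_left_mono card_seed_I_le) simp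
  finally have "real (card (triples_over (seed_I K n l))) \<le> real (2 * l * (?q + 2))"
    by (simp only: of_nat_le_iff)
  also have "\<dots> = 4 * real l + 2 * real l * real ?q"
    by (simp add: algebra_simps)
  also have "\<dots> \<le> 2 * real n + 2 * (2 * K * real ?s) * real ?q"
    using assms(2) seed_shift_lower_bound[OF assms(1), of l]
    by (intro add_mono mult_right_mono) auto
  also have "\<dots> \<le> (2 + 4 * K) * real n"
    using qs assms(1) by (simp add: algebra_simps)
  finally show ?thesis .
qed

lemma seed_triples_le:
  assumes "0 < K" and "2 \<le> n"
  shows "real (seed_triples a K n) \<le> (real (seed_H a n) + 1) * ((2 + 4 * K) * real n)"
proof -
  let ?H = "seed_H a n"
  have "seed_triples a K n \<le> (\<Sum>j\<in>{0..?H}. card (triples_over (seed_I K n (seed_l a j))))"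
    unfolding seed_triples_eq seeded_intervals_def triples_over_UN
    by (rule card_UN_le) simp
  then have "real (seed_triples a K n)
      \<le> (\<Sum>j\<in>{0..?H}. real (card (triples_over (seed_I K n (seed_l a j)))))"
    unfolding of_nat_sum[symmetric] by (rule of_nat_mono)
  also have "\<dots> \<le> (\<Sum>j\<in>{0..?H}. (2 + 4 * K) * real n)"
  proof (rule sum_mono)
    fix j assume "j \<in> {0..?H}"
    then have "seed_l a j \<le> seed_l a ?H" by (simp add: monoD[OF mono_seed_l])
    then have "2 * seed_l a j \<le> n" using seed_l_seed_H_le[OF assms(2), of a] by linarith
    then show "real (card (triples_over (seed_I K n (seed_l a j)))) \<le> (2 + 4 * K) * real n"
      by (rule card_triples_over_seed_I_le[OF assms(1)])
  qed
  finally show ?thesis by (simp add: add.commute)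
qed

theorem lemma9:
  fixes \<alpha> K :: real
  assumes "\<alpha> > 1" and "K > 1"
  shows "\<exists>C. \<forall>n::nat. n \<ge> 2 \<longrightarrow> real (seed_triples \<alpha> K n) \<le> C * real n * ln (real n)"
proof -
  obtain C where C: "\<And>n. 2 \<le> n \<Longrightarrow> real (seed_H \<alpha> n) + 1 \<le> C * ln (real n)"
    using seed_H_log_bound[OF assms(1)] by blast
  have "real (seed_triples \<alpha> K n) \<le> C * (2 + 4 * K) * real n * ln (real n)" if "2 \<le> n" for n
  proof -
    have "real (seed_triples \<alpha> K n) \<le> (real (seed_H \<alpha> n) + 1) * ((2 + 4 * K) * real n)"
      using seed_triples_le[of K n \<alpha>] assms(2) that by simp
    also have "\<dots> \<le> C * ln (real n) * ((2 + 4 * K) * real n)"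
      using C[OF that] assms(2) by (intro mult_right_mono) auto
    finally show ?thesis by (simp add: ac_simps)
  qed
  then show ?thesis by blast
qed

end
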